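(* Let $n\ge3$. A set $A$ of vertices of $C_n$ is maximally even if and only if $A$ is a maximizer of the function $F(A)=\prod_{\{u,v\}\subseteq A,\,u\neq v} d(u,v)$ (product over unordered pairs of distinct vertices of $A$), i.e. $F(A)=\max\{F(B): B\subseteq V(C_n),\ |B|=|A|\}$.
   Context: The cycle $C_n$ has vertex set $\{0,\dots,n-1\}$ with $i$ adjacent to $i+1\bmod n$; $d(u,v)$ is geodesic distance and $d^*(u,v)$ is the least non-negative integer congruent to $v-u$ mod $n$. For $A=\{a_0<\dots<a_{m-1}\}$, $\mathrm{span}_A(a_i,a_j)$ is the least positive integer congruent to $j-i$ mod $m$, and $\sigma^*_k(A)=[\,d^*(u,v): u,v\in A,u\ne v,\mathrm{span}_A(u,v)=k\,]$ (multiset). $A$ is maximally even if for each $1\le k\le m-1$ the set of values of $\sigma^*_k(A)$ is a single integer or two consecutive integers. *)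

theory Defs
  imports Main
begin

text \<open>Cycle C_n on vertex set {0..<n}; i adjacent to (i+1) mod n.\<close>

definition cyc_dist :: "nat \<Rightarrow> nat \<Rightarrow> nat \<Rightarrow> nat" where
  "cyc_dist n u v = (let k = (if u \<le> v then v - u else u - v) in min k (n - k))"

definition dir_dist :: "nat \<Rightarrow> nat \<Rightarrow> nat \<Rightarrow> nat" where
  "dir_dist n u v = nat ((int v - int u) mod int n)"

definition rank_in :: "nat set \<Rightarrow> nat \<Rightarrow> nat" where
  "rank_in A a = card {x \<in> A. x < a}"

definition span_in :: "nat set \<Rightarrow> nat \<Rightarrow> nat \<Rightarrow> nat" where
  "span_in A u v =
     (let m = card A; r = nat ((int (rank_in A v) - int (rank_in A u)) mod int m)
      in if r = 0 then m else r)"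

text \<open>Set of values of the multiset sigma*_k(A).\<close>
definition sigma_vals :: "nat \<Rightarrow> nat set \<Rightarrow> nat \<Rightarrow> nat set" where
  "sigma_vals n A k = {dir_dist n u v | u v. u \<in> A \<and> v \<in> A \<and> u \<noteq> v \<and> span_in A u v = k}"

definition maximally_even :: "nat \<Rightarrow> nat set \<Rightarrow> bool" where
  "maximally_even n A \<longleftrightarrow>
     (\<forall>k. 1 \<le> k \<and> k \<le> card A - 1 \<longrightarrow> (\<exists>c. sigma_vals n A k \<subseteq> {c, c + 1}))"

definition dist_prod :: "nat \<Rightarrow> nat set \<Rightarrow> nat" where
  "dist_prod n A = (\<Prod>(u, v) \<in> {(u, v). u \<in> A \<and> v \<in> A \<and> u < v}. cyc_dist n u v)"

end

theory Submission
  imports Defs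
begin

text \<open>
  Enumerate A as a_0 < ... < a_(m-1) and, for 1 <= k < m, let x_k(i) = d*(a_i, a_(i+k)) with
  indices taken mod m. Counting every pair from both ends gives
  F(A)^2 = prod_k prod_i min(x_k(i), n - x_k(i)), and sum_i x_k(i) = k n for every A of size m.
  Moving two entries of x_k one step towards each other strictly increases the product of the
  min(s, n - s), so for fixed k the inner product is maximal exactly when x_k takes two
  consecutive values only, i.e. when sigma*_k(A) is balanced. The evenly spaced set of the
  floor(i n / m) has all x_k balanced; hence F is maximal precisely on the maximally even sets.
\<close>

lemma (in comm_monoid_set) remove_two:
  assumes "finite A" "x \<in> A" "y \<in> A" "x \<noteq> y"
  shows "F g A = g x \<^bold>* g y \<^bold>* F g (A - {x, y})"
proof -
  have "F g A = g x \<^bold>* F g (A - {x})" using assms by (simp add: remove)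
  also have "F g (A - {x}) = g y \<^bold>* F g (A - {x} - {y})" using assms by (simp add: remove)
  finally show ?thesis by (simp add: assoc insert_commute set_diff_eq)
qed

lemma prod_eq_iff_pointwise:
  fixes f g :: "'a \<Rightarrow> 'b::linordered_semidom"
  assumes "finite I" "\<And>i. i \<in> I \<Longrightarrow> 0 \<le> f i \<and> f i \<le> g i"
    and "\<And>i. i \<in> I \<Longrightarrow> 0 < g i"
  shows "prod f I = prod g I \<longleftrightarrow> (\<forall>i\<in>I. f i = g i)"
proof (intro iffI ballI)
  fix i assume "prod f I = prod g I" "i \<in> I"
  show "f i = g i"
  proof (rule ccontr)
    assume "f i \<noteq> g i"
    then have "f i < g i" using assms(2) \<open>i \<in> I\<close> by (simp add: order.strict_iff_order)
    then have "prod f I < prod g I" by (rule prod_mono_strict[OF \<open>i \<in> I\<close>]) (use assms in auto)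
    with \<open>prod f I = prod g I\<close> show False by simp
  qed
qed (auto intro: prod.cong)

lemma prod_lessThan_remove_rotate:
  fixes i m :: nat
  assumes "i < m"
  shows "(\<Prod>j\<in>{..<m} - {i}. h j) = (\<Prod>k\<in>{1..<m}. h ((i + k) mod m))"
  by (rule prod.reindex_bij_witness[where i = "\<lambda>k. (i + k) mod m" and j = "\<lambda>j. (j + m - i) mod m"])
    (use assms in \<open>auto simp: mod_if\<close>)

section \<open>Balanced sequences\<close>

definition balanced_on :: "'a set \<Rightarrow> ('a \<Rightarrow> nat) \<Rightarrow> bool" where
  "balanced_on I x \<longleftrightarrow> (\<exists>c. \<forall>i\<in>I. x i = c \<or> x i = c + 1)"

lemma prod_balanced_on:
  assumes "finite I" "I \<noteq> {}" "balanced_on I x"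
  defines "s \<equiv> sum x I"
  shows "(\<Prod>i\<in>I. g (x i)) =
    g (s div card I) ^ (card I - s mod card I) * g (s div card I + 1) ^ (s mod card I)"
proof -
  obtain c where c: "\<forall>i\<in>I. x i = c \<or> x i = c + 1" using assms(3) unfolding balanced_on_def by blast
  define J where "J = {i \<in> I. x i = c + 1}"
  define r where "r = card J"
  have J: "J \<subseteq> I" "finite J" "card (I - J) = card I - r"
    using assms(1) unfolding J_def r_def by (auto intro: card_Diff_subset)
  have x_if: "x i = (if i \<in> J then c + 1 else c)" if "i \<in> I" for i
    using c that unfolding J_def by auto
  have r_le: "r \<le> card I" unfolding r_def using J assms(1) by (simp add: card_mono)
  have prod_eq: "(\<Prod>i\<in>I. g (x i)) = g (c + 1) ^ r * g c ^ (card I - r)"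
    using prod.If_cases[OF assms(1), of "\<lambda>i. i \<in> J" "\<lambda>_. g (c + 1)" "\<lambda>_. g c"] J
    by (simp add: x_if r_def if_distrib[of g] Int_absorb1 Diff_eq[symmetric] cong: prod.cong)
  have "s = (c + 1) * r + c * (card I - r)"
    using sum.If_cases[OF assms(1), of "\<lambda>i. i \<in> J" "\<lambda>_. c + 1" "\<lambda>_. c"] J
    by (simp add: s_def x_if r_def Int_absorb1 Diff_eq[symmetric] cong: sum.cong)
  then have s: "s = c * card I + r" using r_le by (simp add: algebra_simps diff_mult_distrib2)
  show ?thesis
  proof (cases "r = card I")
    case True
    then show ?thesis using prod_eq s assms(1,2) by simp
  next
    case False
    then have "s div card I = c" "s mod card I = r" using s r_le by auto
    then show ?thesis using prod_eq by (simp add: mult.commute)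
  qed
qed

lemma prod_balanced_on_eq:
  assumes "finite I" "balanced_on I x" "balanced_on I y" "sum x I = sum y I"
  shows "(\<Prod>i\<in>I. g (x i)) = (\<Prod>i\<in>I. g (y i))"
  using assms prod_balanced_on[of I x g] prod_balanced_on[of I y g] by (cases "I = {}") auto

lemma balanced_on_iff:
  assumes "finite I"
  shows "balanced_on I x \<longleftrightarrow> (\<forall>i\<in>I. \<forall>j\<in>I. x j \<le> x i + 1)"
proof
  assume "\<forall>i\<in>I. \<forall>j\<in>I. x j \<le> x i + 1"
  moreover have "\<forall>j\<in>I. Min (x ` I) \<le> x j" using assms by simp
  moreover have "Min (x ` I) \<in> x ` I" if "I \<noteq> {}" using assms that by simp
  ultimately show "balanced_on I x" unfolding balanced_on_def
    by (cases "I = {}") (fastforce intro!: exI[of _ "Min (x ` I)"])+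
next
  assume "balanced_on I x"
  then obtain c where c: "\<forall>i\<in>I. x i = c \<or> x i = c + 1" unfolding balanced_on_def by blast
  show "\<forall>i\<in>I. \<forall>j\<in>I. x j \<le> x i + 1"
  proof (intro ballI)
    fix i j assume "i \<in> I" "j \<in> I"
    then show "x j \<le> x i + 1" using c[rule_format, of i] c[rule_format, of j] by auto
  qed
qed

lemma prod_less_balanced_on:
  fixes f :: "nat \<Rightarrow> nat"
  assumes smooth: "\<And>a b. lo \<le> a \<Longrightarrow> a + 2 \<le> b \<Longrightarrow> b < hi \<Longrightarrow>
      f a * f b < f (a + 1) * f (b - 1)"
    and pos: "\<And>s. lo \<le> s \<Longrightarrow> s < hi \<Longrightarrow> 0 < f s"
    and I: "finite I" and x: "balanced_on I x"
    and "\<forall>i\<in>I. lo \<le> y i \<and> y i < hi" "sum y I = sum x I" "\<not> balanced_on I y"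
  shows "(\<Prod>i\<in>I. f (y i)) < (\<Prod>i\<in>I. f (x i))"
  using assms(5-7)
proof (induction "\<Sum>i\<in>I. y i ^ 2" arbitrary: y rule: less_induct)
  \<comment> \<open>Moving one unit from a large entry to an entry at least two smaller increases the
    product and decreases the sum of squares.\<close>
  case less
  then obtain i j where ij: "i \<in> I" "j \<in> I" "y i + 2 \<le> y j"
    using balanced_on_iff[OF I] by (auto simp: not_le)
  then have "i \<noteq> j" by auto
  define y' where "y' = y(i := y i + 1, j := y j - 1)"
  have y'_ij: "y' i = y i + 1" "y' j = y j - 1" using \<open>i \<noteq> j\<close> by (simp_all add: y'_def)
  have y'_rest: "y' k = y k" if "k \<in> I - {i, j}" for k using that by (simp add: y'_def)
  note sum_split = sum.remove_two[OF I ij(1,2) \<open>i \<noteq> j\<close>]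
  note prod_split = prod.remove_two[OF I ij(1,2) \<open>i \<noteq> j\<close>]
  have y'_range: "\<forall>k\<in>I. lo \<le> y' k \<and> y' k < hi" using less.prems(1) ij by (auto simp: y'_def)
  have "sum y' I = sum y I"
    using sum_split[of y'] sum_split[of y] sum.cong[OF refl y'_rest] ij(3)
    by (simp add: y'_ij y'_rest)
  with less.prems(2) have y'_sum: "sum y' I = sum x I" by simp
  have "(y i + 1) ^ 2 + (y j - 1) ^ 2 < y i ^ 2 + y j ^ 2"
    using ij(3) by (auto simp: power2_eq_square le_iff_add algebra_simps)
  then have y'_sq: "(\<Sum>k\<in>I. y' k ^ 2) < (\<Sum>k\<in>I. y k ^ 2)"
    using sum_split[of "\<lambda>k. y' k ^ 2"] sum_split[of "\<lambda>k. y k ^ 2"]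
      sum.cong[OF refl, of "I - {i, j}" "\<lambda>k. y' k ^ 2" "\<lambda>k. y k ^ 2"]
    by (simp add: y'_ij y'_rest)
  have "f (y i) * f (y j) < f (y' i) * f (y' j)"
    using smooth ij less.prems(1) by (simp add: y'_ij)
  moreover have "0 < (\<Prod>k\<in>I - {i, j}. f (y k))" by (rule prod_pos) (use less.prems(1) pos in blast)
  ultimately have "(\<Prod>k\<in>I. f (y k)) < (\<Prod>k\<in>I. f (y' k))"
    using prod_split[of "\<lambda>k. f (y' k)"] prod_split[of "\<lambda>k. f (y k)"]
      prod.cong[OF refl, of "I - {i, j}" "\<lambda>k. f (y' k)" "\<lambda>k. f (y k)"]
    by (simp add: y'_rest)
  also have "(\<Prod>k\<in>I. f (y' k)) \<le> (\<Prod>k\<in>I. f (x k))"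
  proof (cases "balanced_on I y'")
    case True
    then show ?thesis using prod_balanced_on_eq[OF I True x y'_sum, of f] by simp
  next
    case False
    then show ?thesis using less.hyps[OF y'_sq y'_range y'_sum] by simp
  qed
  finally show ?case .
qed

lemma prod_le_balanced_on:
  fixes f :: "nat \<Rightarrow> nat"
  assumes smooth: "\<And>a b. lo \<le> a \<Longrightarrow> a + 2 \<le> b \<Longrightarrow> b < hi \<Longrightarrow>
      f a * f b < f (a + 1) * f (b - 1)"
    and pos: "\<And>s. lo \<le> s \<Longrightarrow> s < hi \<Longrightarrow> 0 < f s"
    and I: "finite I" and x: "balanced_on I x"
    and y: "\<forall>i\<in>I. lo \<le> y i \<and> y i < hi" "sum y I = sum x I"
  shows "(\<Prod>i\<in>I. f (y i)) \<le> (\<Prod>i\<in>I. f (x i))"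
    and "(\<Prod>i\<in>I. f (y i)) = (\<Prod>i\<in>I. f (x i)) \<longleftrightarrow> balanced_on I y"
proof -
  have "(\<Prod>i\<in>I. f (y i)) = (\<Prod>i\<in>I. f (x i))" if "balanced_on I y"
    using prod_balanced_on_eq[OF I that x y(2)] .
  moreover have "(\<Prod>i\<in>I. f (y i)) < (\<Prod>i\<in>I. f (x i))" if "\<not> balanced_on I y"
    using prod_less_balanced_on[OF smooth pos I x y that] by blast
  ultimately show "(\<Prod>i\<in>I. f (y i)) \<le> (\<Prod>i\<in>I. f (x i))"
    and "(\<Prod>i\<in>I. f (y i)) = (\<Prod>i\<in>I. f (x i)) \<longleftrightarrow> balanced_on I y"
    by (cases "balanced_on I y"; force)+
qed

section \<open>Distances on the cycle\<close>

definition cyc_len :: "nat \<Rightarrow> nat \<Rightarrow> nat" where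
  "cyc_len n s = min s (n - s)"

lemma cyc_len_pos: "1 \<le> s \<Longrightarrow> s < n \<Longrightarrow> 0 < cyc_len n s"
  by (simp add: cyc_len_def)

lemma cyc_len_smoothing:
  assumes "1 \<le> a" "a + 2 \<le> b" "b < n"
  shows "cyc_len n a * cyc_len n b < cyc_len n (a + 1) * cyc_len n (b - 1)"
proof -
  obtain d where d: "b = a + 2 + d" using assms le_Suc_ex by blast
  obtain c where c: "n = b + 1 + c" using assms less_imp_Suc_add by fastforce
  have "a * c \<le> a * (a + d)" if "c \<le> a + d" using that by simp
  moreover have "a * (c + 1) \<le> (c + d + 3) * (c + 1)" if "a \<le> c + d + 3"
    using that by (rule mult_le_mono1)
  ultimately show ?thesis unfolding cyc_len_def c d using assms(1)
    by (auto simp: min_def algebra_simps)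
qed

lemma dir_dist_eq:
  assumes "u < n" "v < n"
  shows "dir_dist n u v = (if u \<le> v then v - u else n - (u - v))"
proof (cases "u \<le> v")
  case True
  then have "(int v - int u) mod int n = int v - int u" using assms by (intro mod_pos_pos_trivial) auto
  then show ?thesis using True by (simp add: dir_dist_def)
next
  case False
  have "(int v - int u) mod int n = (int v - int u + int n) mod int n" by simp
  also have "\<dots> = int v - int u + int n" using assms False by (intro mod_pos_pos_trivial) auto
  finally show ?thesis using False assms by (simp add: dir_dist_def)
qed

lemma cyc_dist_eq_cyc_len:
  "u < n \<Longrightarrow> v < n \<Longrightarrow> cyc_dist n u v = cyc_len n (dir_dist n u v)"
  by (auto simp: dir_dist_eq cyc_dist_def cyc_len_def Let_def min.commute)

lemma dir_dist_eq_iff: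
  assumes "u < n" "v < n" "k < n"
  shows "dir_dist n u v = k \<longleftrightarrow> v = (u + k) mod n"
proof (cases "u + k < n")
  case True
  then show ?thesis using assms by (auto simp: dir_dist_eq)
next
  case False
  then have "(u + k) mod n = u + k - n" using assms by (simp add: le_mod_geq)
  then show ?thesis using assms False by (auto simp: dir_dist_eq)
qed

lemma cyc_dist_commute: "cyc_dist n u v = cyc_dist n v u"
  by (simp add: cyc_dist_def Let_def)

lemma dist_prod_square:
  assumes "finite B"
  shows "dist_prod n B ^ 2 = (\<Prod>u\<in>B. \<Prod>v\<in>B - {u}. cyc_dist n u v)"
proof -
  define P where "P = {(u, v). u \<in> B \<and> v \<in> B \<and> u < v}"
  have "finite P" unfolding P_def using assms by (auto intro: finite_subset[of _ "B \<times> B"])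
  have "(\<Prod>(u, v)\<in>prod.swap ` P. cyc_dist n u v) = (\<Prod>(u, v)\<in>P. cyc_dist n u v)"
    by (subst prod.reindex) (auto simp: cyc_dist_commute intro: prod.cong)
  then have "dist_prod n B ^ 2 = (\<Prod>(u, v)\<in>P \<union> prod.swap ` P. cyc_dist n u v)"
    using \<open>finite P\<close> by (subst prod.union_disjoint) (auto simp: dist_prod_def P_def power2_eq_square)
  also have "P \<union> prod.swap ` P = Sigma B (\<lambda>u. B - {u})" by (auto simp: P_def)
  finally show ?thesis by (simp add: prod.Sigma assms)
qed

section \<open>Increasing enumerations of vertex sets\<close>

text \<open>The enumeration a is extended to all indices by a_(t+m) = a_t + n, so that
  gap n m a k i is the directed distance from a_i to a_(i+k).\<close>

definition cyclic_lift :: "nat \<Rightarrow> nat \<Rightarrow> (nat \<Rightarrow> nat) \<Rightarrow> nat \<Rightarrow> nat" where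
  "cyclic_lift n m a t = a (t mod m) + n * (t div m)"

definition gap :: "nat \<Rightarrow> nat \<Rightarrow> (nat \<Rightarrow> nat) \<Rightarrow> nat \<Rightarrow> nat \<Rightarrow> nat" where
  "gap n m a k i = cyclic_lift n m a (i + k) - a i"

locale cyclic_enumeration =
  fixes n m :: nat and a :: "nat \<Rightarrow> nat" and B :: "nat set"
  assumes m_pos: "0 < m"
    and a_mono: "i < j \<Longrightarrow> j < m \<Longrightarrow> a i < a j"
    and a_image: "a ` {..<m} = B"
    and a_less_n: "i < m \<Longrightarrow> a i < n"
begin

lemma a_less_iff: "i < m \<Longrightarrow> j < m \<Longrightarrow> a i < a j \<longleftrightarrow> i < j"
  using a_mono by (metis less_asym linorder_neqE_nat)

lemma a_eq_iff: "i < m \<Longrightarrow> j < m \<Longrightarrow> a i = a j \<longleftrightarrow> i = j"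
  using a_mono by (metis less_irrefl linorder_neqE_nat)

lemma inj_on_a: "inj_on a {..<m}"
  by (auto simp: inj_on_def a_eq_iff)

lemma finite_B: "finite B"
  using a_image by blast

lemma card_B: "card B = m"
  using card_image[OF inj_on_a] a_image by simp

lemma rank_in_eq: "i < m \<Longrightarrow> rank_in B (a i) = i"
proof -
  assume "i < m"
  then have "{x \<in> B. x < a i} = a ` {..<i}"
    using a_image a_less_iff by (force simp: image_iff)
  moreover have "inj_on a {..<i}" using inj_on_a \<open>i < m\<close> by (auto intro: inj_on_subset)
  ultimately show ?thesis by (simp add: rank_in_def card_image)
qed

lemma span_in_eq:
  assumes "i < m" "j < m"
  shows "span_in B (a i) (a j) = (if i = j then m else dir_dist m i j)"
proof -
  have "dir_dist m i j = 0 \<longleftrightarrow> i = j" using assms by (auto simp: dir_dist_eq)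
  then show ?thesis using assms by (simp add: span_in_def rank_in_eq card_B dir_dist_def)
qed

lemma cyclic_lift_less: "i < m \<Longrightarrow> cyclic_lift n m a i = a i"
  by (simp add: cyclic_lift_def)

lemma cyclic_lift_add_m: "cyclic_lift n m a (t + m) = cyclic_lift n m a t + n"
  using m_pos by (simp add: cyclic_lift_def div_add_self2)

lemma strict_mono_cyclic_lift: "strict_mono (cyclic_lift n m a)"
unfolding strict_mono_Suc_iff
proof
  fix t
  have "t mod m < m" using m_pos by simp
  then show "cyclic_lift n m a t < cyclic_lift n m a (Suc t)"
    using a_mono[of "t mod m" "Suc (t mod m)"] a_less_n[of "t mod m"]
    by (cases "Suc (t mod m) = m") (auto simp: cyclic_lift_def div_Suc mod_Suc)
qed

lemma gap_bounds:
  assumes "1 \<le> k" "k < m" "i < m"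
  shows "1 \<le> gap n m a k i \<and> gap n m a k i < n"
proof -
  have "cyclic_lift n m a i < cyclic_lift n m a (i + k)" "cyclic_lift n m a (i + k) < cyclic_lift n m a (i + m)"
    using assms by (simp_all add: strict_monoD[OF strict_mono_cyclic_lift])
  then show ?thesis using assms by (simp add: gap_def cyclic_lift_less cyclic_lift_add_m) arith
qed

lemma sum_cyclic_lift_shift: "(\<Sum>i<m. cyclic_lift n m a (i + k)) = (\<Sum>i<m. a i) + k * n"
proof (induction k)
  case 0
  then show ?case by (simp add: cyclic_lift_less)
next
  case (Suc k)
  have "(\<Sum>i<m. cyclic_lift n m a (i + Suc k)) = (\<Sum>i<Suc m. cyclic_lift n m a (i + k)) - cyclic_lift n m a k"
    by (simp only: sum.lessThan_Suc_shift) simp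
  also have "\<dots> = (\<Sum>i<m. cyclic_lift n m a (i + k)) + n"
    using cyclic_lift_add_m[of k] by (simp add: add.commute)
  finally show ?case using Suc by simp
qed

lemma sum_gap: "(\<Sum>i<m. gap n m a k i) = k * n"
proof -
  have "a i \<le> cyclic_lift n m a (i + k)" if "i < m" for i
    using that strict_mono_cyclic_lift by (metis cyclic_lift_less le_add1 strict_mono_less_eq)
  then have "(\<Sum>i<m. gap n m a k i) + (\<Sum>i<m. a i) = (\<Sum>i<m. cyclic_lift n m a (i + k))"
    by (simp add: gap_def sum.distrib[symmetric])
  then show ?thesis by (simp add: sum_cyclic_lift_shift)
qed

lemma dir_dist_eq_gap:
  assumes "k < m" "i < m"
  shows "dir_dist n (a i) (a ((i + k) mod m)) = gap n m a k i"
proof (cases "i + k < m")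
  case True
  then have "a i \<le> a (i + k)" using a_mono[of i "i + k"] by (cases k) auto
  then show ?thesis using True assms a_less_n by (simp add: dir_dist_eq gap_def cyclic_lift_less)
next
  case False
  then obtain j where j: "i + k = j + m" by (metis le_add_diff_inverse2 not_less)
  then have "j < i" using assms by linarith
  then have "j < m" using assms by simp
  then have "(i + k) mod m = j" "(i + k) div m = 1" unfolding j using m_pos by (simp_all add: div_add_self2)
  moreover have "a j < a i" using a_mono \<open>j < i\<close> assms by simp
  ultimately show ?thesis
    using assms a_less_n[of i] a_less_n[of j] \<open>j < m\<close> by (simp add: dir_dist_eq gap_def cyclic_lift_def)
qed

lemma span_in_eq_iff:
  assumes "i < m" "j < m" "1 \<le> k" "k < m"
  shows "span_in B (a i) (a j) = k \<longleftrightarrow> j = (i + k) mod m"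
  using assms dir_dist_eq_iff[of i m j k] dir_dist_eq_iff[of i m i k]
  by (cases "i = j") (simp_all add: span_in_eq dir_dist_def)

lemma sigma_vals_eq:
  assumes "1 \<le> k" "k < m"
  shows "sigma_vals n B k = gap n m a k ` {..<m}"
proof (intro equalityI subsetI)
  fix w assume "w \<in> sigma_vals n B k"
  then obtain i j where "i < m" "j < m" "span_in B (a i) (a j) = k" "w = dir_dist n (a i) (a j)"
    unfolding sigma_vals_def a_image[symmetric] by blast
  then show "w \<in> gap n m a k ` {..<m}"
    using assms by (simp add: span_in_eq_iff dir_dist_eq_gap)
next
  fix w assume "w \<in> gap n m a k ` {..<m}"
  then obtain i where i: "i < m" "w = gap n m a k i" by blast
  define j where "j = (i + k) mod m"
  have "j < m" using m_pos by (simp add: j_def)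
  have "span_in B (a i) (a j) = k" using span_in_eq_iff[OF i(1) \<open>j < m\<close> assms] by (simp add: j_def)
  moreover have "a i \<noteq> a j"
    using calculation span_in_eq[OF i(1) \<open>j < m\<close>] a_eq_iff[OF i(1) \<open>j < m\<close>] assms by auto
  moreover have "w = dir_dist n (a i) (a j)" using i assms by (simp add: j_def dir_dist_eq_gap)
  ultimately show "w \<in> sigma_vals n B k"
    unfolding sigma_vals_def using a_image i(1) \<open>j < m\<close> by blast
qed

lemma maximally_even_iff_balanced_gaps:
  "maximally_even n B \<longleftrightarrow> (\<forall>k\<in>{1..<m}. balanced_on {..<m} (gap n m a k))"
proof -
  have "maximally_even n B \<longleftrightarrow> (\<forall>k\<in>{1..<m}. \<exists>c. sigma_vals n B k \<subseteq> {c, c + 1})"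
    using m_pos by (auto simp: maximally_even_def card_B)
  also have "\<dots> \<longleftrightarrow> (\<forall>k\<in>{1..<m}. balanced_on {..<m} (gap n m a k))"
    by (intro ball_cong) (auto simp: sigma_vals_eq balanced_on_def image_subset_iff)
  finally show ?thesis .
qed

lemma dist_prod_square_eq:
  "dist_prod n B ^ 2 = (\<Prod>k\<in>{1..<m}. \<Prod>i<m. cyc_len n (gap n m a k i))"
proof -
  have reindex: "(\<Prod>u\<in>a ` I. g u) = (\<Prod>i\<in>I. g (a i))"
    if "I \<subseteq> {..<m}" for I and g :: "nat \<Rightarrow> nat"
    using that by (simp add: prod.reindex inj_on_subset[OF inj_on_a])
  have B_minus: "B - {a i} = a ` ({..<m} - {i})" if "i < m" for i
    using that a_image by (auto simp: a_eq_iff)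
  have "dist_prod n B ^ 2 = (\<Prod>u\<in>B. \<Prod>v\<in>B - {u}. cyc_dist n u v)"
    by (rule dist_prod_square[OF finite_B])
  also have "\<dots> = (\<Prod>i<m. \<Prod>v\<in>B - {a i}. cyc_dist n (a i) v)"
    using reindex[of "{..<m}"] a_image by simp
  also have "\<dots> = (\<Prod>i<m. \<Prod>j\<in>{..<m} - {i}. cyc_dist n (a i) (a j))"
    by (rule prod.cong[OF refl]) (simp add: B_minus reindex)
  also have "\<dots> = (\<Prod>i<m. \<Prod>k\<in>{1..<m}. cyc_dist n (a i) (a ((i + k) mod m)))"
    by (simp add: prod_lessThan_remove_rotate)
  also have "\<dots> = (\<Prod>i<m. \<Prod>k\<in>{1..<m}. cyc_len n (gap n m a k i))"
    using m_pos a_less_n by (simp add: cyc_dist_eq_cyc_len dir_dist_eq_gap)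
  also have "\<dots> = (\<Prod>k\<in>{1..<m}. \<Prod>i<m. cyc_len n (gap n m a k i))"
    by (rule prod.swap)
  finally show ?thesis .
qed

end

lemma prod_cyc_len_gap_le:
  assumes B: "cyclic_enumeration n m a B" and E: "cyclic_enumeration n m e E"
    and e: "balanced_on {..<m} (gap n m e k)" and k: "1 \<le> k" "k < m"
  shows "(\<Prod>i<m. cyc_len n (gap n m a k i)) \<le> (\<Prod>i<m. cyc_len n (gap n m e k i))"
    and "(\<Prod>i<m. cyc_len n (gap n m a k i)) = (\<Prod>i<m. cyc_len n (gap n m e k i))
      \<longleftrightarrow> balanced_on {..<m} (gap n m a k)"
proof -
  have "\<forall>i\<in>{..<m}. 1 \<le> gap n m a k i \<and> gap n m a k i < n"
    using cyclic_enumeration.gap_bounds[OF B k] by simp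
  moreover have "sum (gap n m a k) {..<m} = sum (gap n m e k) {..<m}"
    using cyclic_enumeration.sum_gap[OF B] cyclic_enumeration.sum_gap[OF E] by simp
  ultimately show "(\<Prod>i<m. cyc_len n (gap n m a k i)) \<le> (\<Prod>i<m. cyc_len n (gap n m e k i))"
    and "(\<Prod>i<m. cyc_len n (gap n m a k i)) = (\<Prod>i<m. cyc_len n (gap n m e k i))
      \<longleftrightarrow> balanced_on {..<m} (gap n m a k)"
    using prod_le_balanced_on[where lo = 1 and hi = n and f = "cyc_len n",
        OF cyc_len_smoothing cyc_len_pos finite_lessThan e] by simp_all
qed

lemma dist_prod_le_maximally_even:
  assumes B: "cyclic_enumeration n m a B" and E: "cyclic_enumeration n m e E"
    and "maximally_even n E"
  shows "dist_prod n B \<le> dist_prod n E"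
    and "dist_prod n B = dist_prod n E \<longleftrightarrow> maximally_even n B"
proof -
  interpret B: cyclic_enumeration n m a B by (fact B)
  interpret E: cyclic_enumeration n m e E by (fact E)
  define Q where "Q b k = (\<Prod>i<m. cyc_len n (gap n m b k i))" for b k
  have Q: "Q a k \<le> Q e k" "Q a k = Q e k \<longleftrightarrow> balanced_on {..<m} (gap n m a k)" "0 < Q e k"
    if "k \<in> {1..<m}" for k
  proof -
    have k: "1 \<le> k" "k < m" using that by auto
    have "balanced_on {..<m} (gap n m e k)"
      using \<open>maximally_even n E\<close> that by (simp add: E.maximally_even_iff_balanced_gaps)
    then show "Q a k \<le> Q e k" "Q a k = Q e k \<longleftrightarrow> balanced_on {..<m} (gap n m a k)"
      unfolding Q_def using prod_cyc_len_gap_le[OF B E _ k] by simp_all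
    show "0 < Q e k" unfolding Q_def using E.gap_bounds[OF k] cyc_len_pos by (simp add: prod_pos)
  qed
  have square: "dist_prod n B ^ 2 = (\<Prod>k\<in>{1..<m}. Q a k)" "dist_prod n E ^ 2 = (\<Prod>k\<in>{1..<m}. Q e k)"
    by (simp_all add: Q_def B.dist_prod_square_eq E.dist_prod_square_eq)
  have "dist_prod n B ^ 2 \<le> dist_prod n E ^ 2"
    unfolding square by (intro prod_mono) (simp add: Q)
  moreover have "dist_prod n B ^ 2 = dist_prod n E ^ 2 \<longleftrightarrow> maximally_even n B"
    unfolding square B.maximally_even_iff_balanced_gaps
    by (subst prod_eq_iff_pointwise) (simp_all add: Q)
  ultimately show "dist_prod n B \<le> dist_prod n E"
    and "dist_prod n B = dist_prod n E \<longleftrightarrow> maximally_even n B"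
    by simp_all
qed

lemma cyclic_enumeration_exists:
  assumes "B \<subseteq> {0..<n}" "B \<noteq> {}"
  obtains a where "cyclic_enumeration n (card B) a B"
proof
  define xs where "xs = sorted_list_of_set B"
  have "finite B" using assms(1) finite_subset by blast
  then have xs: "length xs = card B" "sorted_wrt (<) xs" "set xs = B"
    by (simp_all add: xs_def)
  show "cyclic_enumeration n (card B) ((!) xs) B"
  proof
    show "0 < card B" using \<open>finite B\<close> assms(2) by (simp add: card_gt_0_iff)
    show "xs ! i < xs ! j" if "i < j" "j < card B" for i j
      using xs that sorted_wrt_iff_nth_less by metis
    show "(!) xs ` {..<card B} = B" using xs by (auto simp: set_conv_nth)
    show "xs ! i < n" if "i < card B" for i using xs that assms(1) nth_mem by fastforce
  qed
qed

section \<open>Evenly spaced sets\<close>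

definition evenly_spaced :: "nat \<Rightarrow> nat \<Rightarrow> nat set" where
  "evenly_spaced n m = (\<lambda>i. i * n div m) ` {..<m}"

lemma cyclic_enumeration_evenly_spaced:
  assumes "0 < m" "m \<le> n"
  shows "cyclic_enumeration n m (\<lambda>i. i * n div m) (evenly_spaced n m)"
proof
  show "i * n div m < j * n div m" if "i < j" "j < m" for i j
  proof -
    have "i * n + m \<le> j * n" using that assms mult_le_mono1[of "i + 1" j n] by simp
    then have "(i * n + m) div m \<le> j * n div m" by (rule div_le_mono)
    then show ?thesis using assms by (simp add: div_add_self2)
  qed
  show "i * n div m < n" if "i < m" for i
    using that assms by (simp add: div_less_iff_less_mult)
qed (simp_all add: assms evenly_spaced_def)

lemma evenly_spaced_subset:
  assumes "m \<le> n"
  shows "evenly_spaced n m \<subseteq> {0..<n}" and "card (evenly_spaced n m) = m"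
proof -
  have "evenly_spaced n m \<subseteq> {0..<n} \<and> card (evenly_spaced n m) = m"
  proof (cases "m = 0")
    case False
    then interpret cyclic_enumeration n m "\<lambda>i. i * n div m" "evenly_spaced n m"
      using assms by (intro cyclic_enumeration_evenly_spaced) auto
    show ?thesis using card_B by (auto simp: a_image[symmetric] a_less_n)
  qed (simp add: evenly_spaced_def)
  then show "evenly_spaced n m \<subseteq> {0..<n}" and "card (evenly_spaced n m) = m" by simp_all
qed

lemma balanced_gap_evenly_spaced:
  assumes "0 < m"
  shows "balanced_on {..<m} (gap n m (\<lambda>i. i * n div m) k)"
proof -
  have lift: "cyclic_lift n m (\<lambda>i. i * n div m) t = t * n div m" for t
  proof -
    have "t * n = (t mod m) * n + m * (n * (t div m))"
      by (metis mod_div_mult_eq add_mult_distrib mult.assoc mult.commute)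
    then show ?thesis using assms by (simp add: cyclic_lift_def)
  qed
  have "(i * n + k * n) div m - i * n div m \<in> {k * n div m, k * n div m + 1}" for i
  proof -
    have "i * n mod m + k * n mod m < 2 * m" using assms by (simp add: add_less_mono mult_2)
    then have "(i * n mod m + k * n mod m) div m < 2" by (simp add: div_less_iff_less_mult)
    then show ?thesis by (auto simp: div_add1_eq[of "i * n" "k * n" m] less_2_cases_iff)
  qed
  then show ?thesis
    unfolding balanced_on_def gap_def lift by (auto simp: add_mult_distrib)
qed

lemma maximally_even_evenly_spaced:
  assumes "0 < m" "m \<le> n"
  shows "maximally_even n (evenly_spaced n m)"
  using cyclic_enumeration.maximally_even_iff_balanced_gaps[OF cyclic_enumeration_evenly_spaced[OF assms]]
    balanced_gap_evenly_spaced[OF assms(1)] by blast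

lemma dist_prod_evenly_spaced:
  assumes "B \<subseteq> {0..<n}"
  shows "dist_prod n B \<le> dist_prod n (evenly_spaced n (card B))"
    and "dist_prod n B = dist_prod n (evenly_spaced n (card B)) \<longleftrightarrow> maximally_even n B"
proof -
  consider "B = {}" | a where "cyclic_enumeration n (card B) a B"
    using cyclic_enumeration_exists[OF assms] by blast
  then have "dist_prod n B \<le> dist_prod n (evenly_spaced n (card B)) \<and>
      (dist_prod n B = dist_prod n (evenly_spaced n (card B)) \<longleftrightarrow> maximally_even n B)"
  proof cases
    case 1
    then show ?thesis by (simp add: evenly_spaced_def maximally_even_def)
  next
    case (2 a)
    have "0 < card B" "card B \<le> n"
      using cyclic_enumeration.m_pos[OF 2] assms card_mono[of "{0..<n}" B] by simp_all
    then show ?thesis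
      using dist_prod_le_maximally_even[OF 2 cyclic_enumeration_evenly_spaced maximally_even_evenly_spaced]
      by blast
  qed
  then show "dist_prod n B \<le> dist_prod n (evenly_spaced n (card B))"
    and "dist_prod n B = dist_prod n (evenly_spaced n (card B)) \<longleftrightarrow> maximally_even n B"
    by simp_all
qed

theorem mainTheorem6:
  fixes n :: nat and A :: "nat set"
  assumes "n \<ge> 3" and "A \<subseteq> {0..<n}"
  shows "maximally_even n A \<longleftrightarrow>
         dist_prod n A = Max {dist_prod n B | B. B \<subseteq> {0..<n} \<and> card B = card A}"
proof -
  define E where "E = evenly_spaced n (card A)"
  let ?S = "{dist_prod n B | B. B \<subseteq> {0..<n} \<and> card B = card A}"
  have "finite ?S" by (rule finite_subset[of _ "dist_prod n ` Pow {0..<n}"]) auto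
  have "card A \<le> n" using assms(2) card_mono[of "{0..<n}" A] by simp
  then have "E \<subseteq> {0..<n}" "card E = card A" unfolding E_def by (rule evenly_spaced_subset)+
  moreover have "dist_prod n B \<le> dist_prod n E" if "B \<subseteq> {0..<n}" "card B = card A" for B
    using dist_prod_evenly_spaced(1)[OF that(1)] that(2) by (simp add: E_def)
  ultimately have "Max ?S = dist_prod n E" using \<open>finite ?S\<close> by (intro Max_eqI) auto
  then show ?thesis using dist_prod_evenly_spaced(2)[OF assms(2)] by (simp add: E_def)
qed

end
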